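(* Let $G$ be a graph on $V$ and let $W_1,W_2\subseteq V$ be disjoint, with $W_1$ reducible in $G$. Then $W_2$ is reducible in $\Gamma_{W_1}(G)$ if and only if $W_1\cup W_2$ is reducible in $G$, and in this case $\Gamma_{W_1\cup W_2}(G)=\Gamma_{W_2}(\Gamma_{W_1}(G))$.
   Context: A graph means a finite simple graph in which loops are allowed, with adjacency matrix $A$ over $\mathbf F_2$ ($A_{vv}=1$ iff $v$ has a loop). Let $\mathcal V$ be the $\mathbf F_2$-vector space with basis $V$ and $\mathcal E(x,y)=x^TAy$. For $W\subseteq V$, $\langle W\rangle$ is the span of $W$ and $\langle W\rangle^{\perp\mathcal E}=\{x\in\mathcal V:\mathcal E(x,w)=0\ \forall w\in\langle W\rangle\}$. $W$ is reducible in $G$ if $\langle W\rangle+\langle W\rangle^{\perp\mathcal E}=\mathcal V$. For reducible $W$, define $\mathcal E^W(x_1,x_2)=\mathcal E(x_1',x_2')$ where $x_i'\in\langle W\rangle^{\perp\mathcal E}$ are any vectors with $x_i-x_i'\in\langle W\rangle$ (well defined); the graph reduction $\Gamma_W(G)$ is the graph on vertex set $V\setminus W$ in which $v,w$ (possibly equal) are joined iff $\mathcal E^W(v,w)=1$. *)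

theory Defs
  imports Main
begin

text \<open>A vector of the F2-vector space
with basis V is identified with its support, a subset of V; addition is symmetric
difference.\<close>

type_synonym 'a graph = "'a set \<times> ('a \<Rightarrow> 'a \<Rightarrow> bool)"

definition is_graph :: "'a graph \<Rightarrow> bool" where
  "is_graph G \<longleftrightarrow> finite (fst G) \<and> (\<forall>u v. snd G u v = snd G v u)
     \<and> (\<forall>u v. snd G u v \<longrightarrow> u \<in> fst G \<and> v \<in> fst G)"

definition vecs :: "'a graph \<Rightarrow> 'a set set" where
  "vecs G = Pow (fst G)"

definition vadd :: "'a set \<Rightarrow> 'a set \<Rightarrow> 'a set" where
  "vadd x y = (x - y) \<union> (y - x)"

text \<open>E(x,y) = x^T A y over F2; True means 1.\<close>
definition bil :: "'a graph \<Rightarrow> 'a set \<Rightarrow> 'a set \<Rightarrow> bool" where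
  "bil G x y \<longleftrightarrow> odd (card {(u, v). u \<in> x \<and> v \<in> y \<and> snd G u v})"

text \<open>The span of a set W of basis vectors: all F2-combinations, i.e. subsets of W.\<close>
definition span2 :: "'a set \<Rightarrow> 'a set set" where
  "span2 W = Pow W"

definition perp :: "'a graph \<Rightarrow> 'a set \<Rightarrow> 'a set set" where
  "perp G W = {x \<in> vecs G. \<forall>w \<in> span2 W. \<not> bil G x w}"

definition reducible :: "'a graph \<Rightarrow> 'a set \<Rightarrow> bool" where
  "reducible G W \<longleftrightarrow> {vadd a b | a b. a \<in> span2 W \<and> b \<in> perp G W} = vecs G"

definition proj :: "'a graph \<Rightarrow> 'a set \<Rightarrow> 'a set \<Rightarrow> 'a set" where
  "proj G W x = (SOME x'. x' \<in> perp G W \<and> vadd x x' \<in> span2 W)"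

definition bilW :: "'a graph \<Rightarrow> 'a set \<Rightarrow> 'a set \<Rightarrow> 'a set \<Rightarrow> bool" where
  "bilW G W x y \<longleftrightarrow> bil G (proj G W x) (proj G W y)"

definition reduction :: "'a graph \<Rightarrow> 'a set \<Rightarrow> 'a graph" where
  "reduction G W = (fst G - W,
     \<lambda>v w. v \<in> fst G - W \<and> w \<in> fst G - W \<and> bilW G W {v} {w})"

end

theory Submission
  imports Defs
begin

text \<open>
  Vectors are subsets of V, addition is symmetric difference and
  E is the parity of the number of edges between two vertex sets, so E is a
  symmetric bilinear form over F2.  Reducibility of W says that every vector x
  has a partner x' in the E-orthogonal complement of span W with x + x' in span W;
  E^W(x,y) may then be computed as E(x',y).  Two facts about G1 = Gamma_W1(G)
  drive the theorem: the form of G1 is E^W1 itself on subsets of V - W1 (both are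
  bilinear and agree on pairs of vertices), and for c in G1 with partner d the
  value of E_G1(c,w) equals E(d,w).  Consequently c is orthogonal to span W2 in
  G1 iff d is orthogonal to span(W1 u W2) in G, which transports partners in both
  directions and yields the equivalence of the two reducibility statements.
  For the equality of reductions, composing the partners of a vector x first in
  G1 (w.r.t. W2) and then in G (w.r.t. W1) gives a partner of x for W1 u W2, on
  which both reduced forms take the same value.
\<close>

section \<open>Vectors over F2 as sets\<close>

lemma in_vadd [simp]: "z \<in> vadd x y \<longleftrightarrow> (z \<in> x) \<noteq> (z \<in> y)"
  unfolding vadd_def by auto

lemma vadd_eq_iff: "vadd x b = a \<longleftrightarrow> x = vadd a b"
  by auto

lemma vadd_subset: "a \<subseteq> V \<Longrightarrow> b \<subseteq> V \<Longrightarrow> vadd a b \<subseteq> V"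
  by auto

lemma vadd_trans: "vadd x y \<subseteq> A \<Longrightarrow> vadd y z \<subseteq> B \<Longrightarrow> vadd x z \<subseteq> A \<union> B"
  by (auto simp: subset_iff)

lemma vadd_vadd_subset:
  "vadd a a' \<subseteq> W \<Longrightarrow> vadd b b' \<subseteq> W \<Longrightarrow> vadd (vadd a b) (vadd a' b') \<subseteq> W"
  by (auto simp: subset_iff)

lemma insert_eq_vadd: "v \<notin> A \<Longrightarrow> insert v A = vadd {v} A"
  by auto

lemma odd_card_vadd:
  assumes "finite A" "finite B"
  shows "odd (card (vadd A B)) \<longleftrightarrow> odd (card A) \<noteq> odd (card B)"
proof -
  have split: "vadd A B = (A \<union> B) - (A \<inter> B)" by auto
  have "card (A \<inter> B) \<le> card (A \<union> B)" using assms by (intro card_mono) auto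
  moreover have "card (vadd A B) = card (A \<union> B) - card (A \<inter> B)"
    unfolding split using assms by (intro card_Diff_subset) auto
  moreover have "card (A \<union> B) + card (A \<inter> B) = card A + card B"
    using card_Un_Int[OF assms] by simp
  ultimately have "card (vadd A B) + 2 * card (A \<inter> B) = card A + card B" by linarith
  then have "even (card (vadd A B) + 2 * card (A \<inter> B)) \<longleftrightarrow> even (card A + card B)"
    by simp
  then show ?thesis by simp
qed

text \<open>Two additive maps from Pow V to F2 that agree on singletons agree everywhere,
  since the singletons span Pow V.\<close>
lemma additive_eqI:
  assumes "finite V"
    and f_add: "\<And>x y. x \<subseteq> V \<Longrightarrow> y \<subseteq> V \<Longrightarrow> f (vadd x y) \<longleftrightarrow> f x \<noteq> f y"
    and g_add: "\<And>x y. x \<subseteq> V \<Longrightarrow> y \<subseteq> V \<Longrightarrow> g (vadd x y) \<longleftrightarrow> g x \<noteq> g y"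
    and singletons: "\<And>v. v \<in> V \<Longrightarrow> f {v} = g {v}"
    and "x \<subseteq> V"
  shows "f x = g x"
proof -
  have "finite x" using assms(5) \<open>finite V\<close> by (rule finite_subset)
  then show ?thesis using \<open>x \<subseteq> V\<close>
  proof (induction x rule: finite_induct)
    case empty
    have empty_sum: "vadd {} {} = {}" by auto
    have "\<not> f {}" "\<not> g {}"
      using f_add[of "{}" "{}"] g_add[of "{}" "{}"] unfolding empty_sum by auto
    then show ?case by simp
  next
    case (insert v A)
    then have "v \<in> V" "A \<subseteq> V" by auto
    have "f (insert v A) \<longleftrightarrow> f {v} \<noteq> f A" "g (insert v A) \<longleftrightarrow> g {v} \<noteq> g A"
      unfolding insert_eq_vadd[OF insert.hyps(2)]
      using f_add g_add \<open>v \<in> V\<close> \<open>A \<subseteq> V\<close> by auto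
    then show ?case using insert.IH \<open>A \<subseteq> V\<close> singletons[OF \<open>v \<in> V\<close>] by simp
  qed
qed

definition biadditive :: "'a set \<Rightarrow> ('a set \<Rightarrow> 'a set \<Rightarrow> bool) \<Rightarrow> bool" where
  "biadditive V F \<longleftrightarrow> (\<forall>x y z. x \<subseteq> V \<longrightarrow> y \<subseteq> V \<longrightarrow> z \<subseteq> V \<longrightarrow>
      (F (vadd x y) z \<longleftrightarrow> F x z \<noteq> F y z) \<and> (F z (vadd x y) \<longleftrightarrow> F z x \<noteq> F z y))"

lemma biadditive_eqI:
  assumes "finite V" "biadditive V F" "biadditive V F'"
    and singletons: "\<And>u v. u \<in> V \<Longrightarrow> v \<in> V \<Longrightarrow> F {u} {v} = F' {u} {v}"
    and "x \<subseteq> V" "y \<subseteq> V"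
  shows "F x y = F' x y"
proof -
  have row: "F {u} y = F' {u} y" if "u \<in> V" for u
    by (rule additive_eqI[where f = "F {u}" and g = "F' {u}", OF \<open>finite V\<close> _ _ _ \<open>y \<subseteq> V\<close>])
      (use assms(2,3) singletons that in \<open>auto simp: biadditive_def\<close>)
  show ?thesis
    by (rule additive_eqI[where f = "\<lambda>x. F x y" and g = "\<lambda>x. F' x y",
          OF \<open>finite V\<close> _ _ _ \<open>x \<subseteq> V\<close>])
      (use assms(2,3,6) row in \<open>auto simp: biadditive_def\<close>)
qed

section \<open>The bilinear form of a graph\<close>

lemma graph_finite: "is_graph H \<Longrightarrow> finite (fst H)"
  by (simp add: is_graph_def)

lemma graph_sym: "is_graph H \<Longrightarrow> snd H u v = snd H v u"
  by (simp add: is_graph_def)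

lemma graph_edge_in: "is_graph H \<Longrightarrow> snd H u v \<Longrightarrow> u \<in> fst H \<and> v \<in> fst H"
  unfolding is_graph_def by blast

lemma bil_add_left:
  assumes "is_graph H"
  shows "bil H (vadd x y) z \<longleftrightarrow> bil H x z \<noteq> bil H y z"
proof -
  define S where "S x = {(u, v). u \<in> x \<and> v \<in> z \<and> snd H u v}" for x
  have "S s \<subseteq> fst H \<times> fst H" for s
    using graph_edge_in[OF assms] by (auto simp: S_def)
  then have fin: "finite (S s)" for s
    using graph_finite[OF assms] by (meson finite_SigmaI finite_subset)
  have "S (vadd x y) = vadd (S x) (S y)" by (auto simp: S_def)
  then show ?thesis using odd_card_vadd[OF fin fin] by (simp add: bil_def S_def)
qed

lemma bil_sym:
  assumes "is_graph H"
  shows "bil H x y = bil H y x"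
proof -
  have "{(u, v). u \<in> y \<and> v \<in> x \<and> snd H u v}
      = prod.swap ` {(u, v). u \<in> x \<and> v \<in> y \<and> snd H u v}"
    by (auto simp: image_iff graph_sym[OF assms, of _ _])
  moreover have "inj_on prod.swap A" for A :: "('a \<times> 'a) set" by (rule inj_onI) (metis swap_swap)
  ultimately show ?thesis unfolding bil_def by (simp add: card_image)
qed

lemma bil_add_right:
  "is_graph H \<Longrightarrow> bil H z (vadd x y) \<longleftrightarrow> bil H z x \<noteq> bil H z y"
  using bil_add_left bil_sym by metis

lemma biadditive_bil: "is_graph H \<Longrightarrow> biadditive V (bil H)"
  by (simp add: biadditive_def bil_add_left bil_add_right)

section \<open>Orthogonal complements and reducibility\<close>

lemma perp_subset: "x \<in> perp H W \<Longrightarrow> x \<subseteq> fst H"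
  by (simp add: perp_def vecs_def)

lemma perp_vadd: "is_graph H \<Longrightarrow> a \<in> perp H W \<Longrightarrow> b \<in> perp H W \<Longrightarrow> vadd a b \<in> perp H W"
  by (auto simp: perp_def vecs_def bil_add_left)

lemma perp_Un:
  assumes "is_graph H"
  shows "perp H (W1 \<union> W2) = perp H W1 \<inter> perp H W2"
proof (intro equalityI subsetI)
  fix d assume d: "d \<in> perp H W1 \<inter> perp H W2"
  have "\<not> bil H d w" if "w \<subseteq> W1 \<union> W2" for w
  proof -
    have "w = vadd (w \<inter> W1) (w - W1)" by auto
    moreover have "\<not> bil H d (w \<inter> W1)" "\<not> bil H d (w - W1)"
      using d that by (auto simp: perp_def span2_def)
    ultimately show ?thesis using bil_add_right[OF assms] by metis
  qed
  then show "d \<in> perp H (W1 \<union> W2)" using d by (auto simp: perp_def span2_def)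
qed (auto simp: perp_def span2_def)

lemma perp_shift:
  assumes "is_graph H" "x' \<in> perp H W" "vadd y y' \<subseteq> W"
  shows "bil H x' y = bil H x' y'"
proof -
  have "\<not> bil H x' (vadd y y')" using assms(2,3) by (simp add: perp_def span2_def)
  then show ?thesis using bil_add_right[OF assms(1)] by metis
qed

lemma reducible_iff:
  assumes "W \<subseteq> fst H"
  shows "reducible H W \<longleftrightarrow> (\<forall>x \<subseteq> fst H. \<exists>b \<in> perp H W. vadd x b \<subseteq> W)"
proof -
  define sums where "sums = {vadd a b | a b. a \<in> span2 W \<and> b \<in> perp H W}"
  have "sums \<subseteq> vecs H"
    using assms by (auto simp: sums_def span2_def vecs_def perp_def subset_iff)
  then have "reducible H W \<longleftrightarrow> (\<forall>x \<subseteq> fst H. x \<in> sums)"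
    unfolding reducible_def sums_def[symmetric] by (auto simp: vecs_def)
  moreover have "x \<in> sums \<longleftrightarrow> (\<exists>b \<in> perp H W. vadd x b \<subseteq> W)" for x
    by (auto simp: sums_def span2_def vadd_eq_iff[symmetric])
  ultimately show ?thesis by simp
qed

lemma proj_spec:
  assumes "reducible H W" "W \<subseteq> fst H" "x \<subseteq> fst H"
  shows "proj H W x \<in> perp H W" "vadd x (proj H W x) \<subseteq> W"
proof -
  have "\<exists>x'. x' \<in> perp H W \<and> vadd x x' \<in> span2 W"
    using assms by (auto simp: reducible_iff span2_def)
  then have "proj H W x \<in> perp H W \<and> vadd x (proj H W x) \<in> span2 W"
    unfolding proj_def by (rule someI_ex)
  then show "proj H W x \<in> perp H W" "vadd x (proj H W x) \<subseteq> W"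
    by (auto simp: span2_def)
qed

lemma bilW_rep:
  assumes "is_graph H" "reducible H W" "W \<subseteq> fst H" "x \<subseteq> fst H" "y \<subseteq> fst H"
    and "x' \<in> perp H W" "vadd x x' \<subseteq> W"
  shows "bilW H W x y = bil H x' y"
proof -
  note px = proj_spec[OF assms(2,3,4)] and py = proj_spec[OF assms(2,3,5)]
  have "vadd (proj H W x) x' \<subseteq> W" using px(2) assms(7) by (auto simp: subset_iff)
  then have "bil H (proj H W x) (proj H W y) = bil H x' (proj H W y)"
    using perp_shift[OF assms(1) py(1)] bil_sym[OF assms(1)] by metis
  also have "\<dots> = bil H x' y"
  proof -
    have "vadd (proj H W y) y \<subseteq> W" using py(2) by (auto simp: subset_iff)
    then show ?thesis by (rule perp_shift[OF assms(1,6)])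
  qed
  finally show ?thesis by (simp add: bilW_def)
qed

lemma bilW_sym: "is_graph H \<Longrightarrow> bilW H W x y = bilW H W y x"
  by (simp add: bilW_def bil_sym)

text \<open>E^W is additive, since sums of partners are partners of sums.\<close>
lemma bilW_add_left:
  assumes "is_graph H" "reducible H W" "W \<subseteq> fst H"
    and "x \<subseteq> fst H" "y \<subseteq> fst H" "z \<subseteq> fst H"
  shows "bilW H W (vadd x y) z \<longleftrightarrow> bilW H W x z \<noteq> bilW H W y z"
proof -
  note px = proj_spec[OF assms(2,3,4)] and py = proj_spec[OF assms(2,3,5)]
  have "vadd (proj H W x) (proj H W y) \<in> perp H W" using perp_vadd[OF assms(1) px(1) py(1)] .
  moreover have "vadd (vadd x y) (vadd (proj H W x) (proj H W y)) \<subseteq> W"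
    using vadd_vadd_subset[OF px(2) py(2)] .
  moreover have "vadd x y \<subseteq> fst H" using vadd_subset[OF assms(4,5)] .
  ultimately have "bilW H W (vadd x y) z = bil H (vadd (proj H W x) (proj H W y)) z"
    using bilW_rep[OF assms(1-3) _ assms(6)] by blast
  then show ?thesis
    using bil_add_left[OF assms(1)] bilW_rep[OF assms(1-3)] assms(4-6) px py by simp
qed

section \<open>The reduced graph\<close>

lemma fst_reduction [simp]: "fst (reduction H W) = fst H - W"
  by (simp add: reduction_def)

lemma reduction_is_graph:
  assumes "is_graph H"
  shows "is_graph (reduction H W)"
proof -
  have "finite (fst H - W)" using graph_finite[OF assms] by simp
  moreover have "snd (reduction H W) u v = snd (reduction H W) v u" for u v
    using bilW_sym[OF assms, of W "{u}" "{v}"] by (auto simp: reduction_def)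
  moreover have "snd (reduction H W) u v \<Longrightarrow> u \<in> fst H - W \<and> v \<in> fst H - W" for u v
    by (simp add: reduction_def)
  ultimately show ?thesis unfolding is_graph_def fst_reduction by blast
qed

text \<open>On subsets of V - W the form of Gamma_W(H) is E^W: both are biadditive and agree on
  pairs of vertices by definition of the reduced adjacency.\<close>
lemma bil_reduction:
  assumes "is_graph H" "reducible H W" "W \<subseteq> fst H"
    and "s \<subseteq> fst H - W" "t \<subseteq> fst H - W"
  shows "bil (reduction H W) s t = bilW H W s t"
proof (rule biadditive_eqI[OF _ _ _ _ assms(4,5)])
  show "finite (fst H - W)" using graph_finite[OF assms(1)] by simp
  show "biadditive (fst H - W) (bil (reduction H W))"
    by (rule biadditive_bil[OF reduction_is_graph[OF assms(1)]])
  show "biadditive (fst H - W) (bilW H W)"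
    unfolding biadditive_def
  proof (intro allI impI conjI)
    fix x y z assume "x \<subseteq> fst H - W" "y \<subseteq> fst H - W" "z \<subseteq> fst H - W"
    then have xyz: "x \<subseteq> fst H" "y \<subseteq> fst H" "z \<subseteq> fst H" by auto
    show "bilW H W (vadd x y) z \<longleftrightarrow> bilW H W x z \<noteq> bilW H W y z"
      by (rule bilW_add_left[OF assms(1-3) xyz])
    then show "bilW H W z (vadd x y) \<longleftrightarrow> bilW H W z x \<noteq> bilW H W z y"
      by (simp add: bilW_sym[OF assms(1), of W z])
  qed
  show "bil (reduction H W) {u} {v} = bilW H W {u} {v}" if "u \<in> fst H - W" "v \<in> fst H - W" for u v
  proof -
    have "{(a, b). a \<in> {u} \<and> b \<in> {v} \<and> snd (reduction H W) a b}
        = (if bilW H W {u} {v} then {(u, v)} else {})"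
      using that by (auto simp: reduction_def)
    then show ?thesis by (simp add: bil_def)
  qed
qed

lemma bil_reduction_partner:
  assumes "is_graph H" "reducible H W" "W \<subseteq> fst H"
    and "d \<in> perp H W" "c \<subseteq> fst H - W" "vadd c d \<subseteq> W" "w \<subseteq> fst H - W"
  shows "bil (reduction H W) c w = bil H d w"
proof -
  have "c \<subseteq> fst H" "w \<subseteq> fst H" using assms(5,7) by auto
  then show ?thesis
    using bil_reduction[OF assms(1-3,5,7)] bilW_rep[OF assms(1-3) _ _ assms(4,6)] by simp
qed

lemma perp_reduction_iff:
  assumes "is_graph H" "reducible H W1" "W1 \<subseteq> fst H" "W2 \<subseteq> fst H - W1"
    and "d \<in> perp H W1" "c \<subseteq> fst H - W1" "vadd c d \<subseteq> W1"
  shows "c \<in> perp (reduction H W1) W2 \<longleftrightarrow> d \<in> perp H (W1 \<union> W2)"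
proof -
  have "c \<in> perp (reduction H W1) W2 \<longleftrightarrow> (\<forall>w \<subseteq> W2. \<not> bil (reduction H W1) c w)"
    using assms(6) by (auto simp: perp_def vecs_def span2_def)
  also have "\<dots> \<longleftrightarrow> (\<forall>w \<subseteq> W2. \<not> bil H d w)"
  proof -
    have "bil (reduction H W1) c w = bil H d w" if "w \<subseteq> W2" for w
      using bil_reduction_partner[OF assms(1-3,5-7)] that assms(4) by blast
    then show ?thesis by blast
  qed
  also have "\<dots> \<longleftrightarrow> d \<in> perp H W2"
    using perp_subset[OF assms(5)] by (auto simp: perp_def vecs_def span2_def)
  finally show ?thesis using perp_Un[OF assms(1)] assms(5) by blast
qed

section \<open>Reduction in two steps\<close>

text \<open>If W2 is reducible in Gamma_W1(G), partners for W1 and then for W2 combine to a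
  partner for W1 u W2.\<close>
lemma reducible_Un_of_reduction:
  assumes "is_graph G" "reducible G W1" "W1 \<subseteq> fst G" "W2 \<subseteq> fst G - W1"
    and "reducible (reduction G W1) W2"
  shows "reducible G (W1 \<union> W2)"
  unfolding reducible_iff[OF Un_least[OF assms(3) order_trans[OF assms(4) Diff_subset]]]
proof (intro allI impI)
  fix x assume "x \<subseteq> fst G"
  then obtain b where b: "b \<in> perp G W1" "vadd x b \<subseteq> W1"
    using assms(2,3) reducible_iff by blast
  have "W2 \<subseteq> fst (reduction G W1)" "b - W1 \<subseteq> fst (reduction G W1)"
    using assms(4) perp_subset[OF b(1)] by auto
  from proj_spec[OF assms(5) this] obtain c
    where c: "c \<in> perp (reduction G W1) W2" "vadd (b - W1) c \<subseteq> W2" by blast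
  have cV: "c \<subseteq> fst G - W1" using perp_subset[OF c(1)] by simp
  then have cG: "c \<subseteq> fst G" by blast
  define d where "d = proj G W1 c"
  note d = proj_spec[OF assms(2,3) cG, folded d_def]
  have "d \<in> perp G (W1 \<union> W2)"
    using perp_reduction_iff[OF assms(1-4) d(1) cV d(2)] c(1) by blast
  moreover have "vadd x d \<subseteq> W1 \<union> W2"
  proof -
    have "vadd b (b - W1) \<subseteq> W1" by auto
    with b(2) have "vadd x (b - W1) \<subseteq> W1" using vadd_trans[OF b(2)] by blast
    then have "vadd x c \<subseteq> W1 \<union> W2" using c(2) by (rule vadd_trans)
    then show ?thesis using vadd_trans[OF _ d(2)] by blast
  qed
  ultimately show "\<exists>d \<in> perp G (W1 \<union> W2). vadd x d \<subseteq> W1 \<union> W2" by blast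
qed

text \<open>Conversely, a partner b of x for W1 u W2, cut down to V - W1, is a partner of x
  for W2 in Gamma_W1(G).\<close>
lemma reduction_reducible_of_Un:
  assumes "is_graph G" "reducible G W1" "W1 \<subseteq> fst G" "W2 \<subseteq> fst G - W1"
    and "reducible G (W1 \<union> W2)"
  shows "reducible (reduction G W1) W2"
  unfolding reducible_iff[of W2 "reduction G W1", simplified, OF assms(4)]
proof (intro allI impI)
  fix x assume x: "x \<subseteq> fst G - W1"
  have "W1 \<union> W2 \<subseteq> fst G" using assms(3,4) by blast
  then obtain b where b: "b \<in> perp G (W1 \<union> W2)" "vadd x b \<subseteq> W1 \<union> W2"
    using assms(5) x reducible_iff by blast
  have bW1: "b \<in> perp G W1" using b(1) perp_Un[OF assms(1)] by blast
  have cV: "b - W1 \<subseteq> fst G - W1" using perp_subset[OF bW1] by blast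
  have "vadd (b - W1) b \<subseteq> W1" by auto
  then have "b - W1 \<in> perp (reduction G W1) W2"
    using perp_reduction_iff[OF assms(1-4) bW1 cV] b(1) by blast
  moreover have "vadd x (b - W1) \<subseteq> W2"
    using b(2) x by (auto simp: subset_iff)
  ultimately show "\<exists>c \<in> perp (reduction G W1) W2. vadd x c \<subseteq> W2" by blast
qed

text \<open>The two reduced forms agree: a partner rx of x for W2 in Gamma_W1(G), composed with
  a partner d of rx for W1 in G, is a partner of x for W1 u W2 in G.\<close>
lemma bilW_Un_eq_bilW_reduction:
  assumes "is_graph G" "reducible G W1" "W1 \<subseteq> fst G" "W2 \<subseteq> fst G - W1"
    and "reducible G (W1 \<union> W2)"
    and x: "x \<subseteq> fst G - W1" and y: "y \<subseteq> fst G - W1"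
  shows "bilW G (W1 \<union> W2) x y = bilW (reduction G W1) W2 x y"
proof -
  note G1 = reduction_is_graph[OF assms(1)]
    reduction_reducible_of_Un[OF assms(1-5)]
  have W2: "W2 \<subseteq> fst (reduction G W1)" using assms(4) by simp
  define rx where "rx = proj (reduction G W1) W2 x"
  have "x \<subseteq> fst (reduction G W1)" using x by simp
  note rx = proj_spec[OF G1(2) W2 this, folded rx_def]
  have rxV: "rx \<subseteq> fst G - W1" using perp_subset[OF rx(1)] by simp
  then have "rx \<subseteq> fst G" by blast
  define d where "d = proj G W1 rx"
  note d = proj_spec[OF assms(2,3) \<open>rx \<subseteq> fst G\<close>, folded d_def]
  have dP: "d \<in> perp G (W1 \<union> W2)"
    using perp_reduction_iff[OF assms(1-4) d(1) rxV d(2)] rx(1) by blast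
  have "bilW (reduction G W1) W2 x y = bil (reduction G W1) rx y"
    using bilW_rep[OF G1 W2 _ _ rx] x y by simp
  also have "\<dots> = bil G d y"
    by (rule bil_reduction_partner[OF assms(1-3) d(1) rxV d(2) y])
  also have "\<dots> = bilW G (W1 \<union> W2) x y"
  proof -
    have "vadd x d \<subseteq> W1 \<union> W2" using vadd_trans[OF rx(2) d(2)] by blast
    moreover have "W1 \<union> W2 \<subseteq> fst G" "x \<subseteq> fst G" "y \<subseteq> fst G" using assms(3,4) x y by auto
    ultimately show ?thesis using bilW_rep[OF assms(1,5) _ _ _ dP] by simp
  qed
  finally show ?thesis by simp
qed

lemma reduction_Un:
  assumes "is_graph G" "reducible G W1" "W1 \<subseteq> fst G" "W2 \<subseteq> fst G - W1"
    and "reducible G (W1 \<union> W2)"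
  shows "reduction G (W1 \<union> W2) = reduction (reduction G W1) W2"
  using bilW_Un_eq_bilW_reduction[OF assms]
  unfolding reduction_def[of G "W1 \<union> W2"] reduction_def[of "reduction G W1" W2]
  by (auto simp: Diff_Un fun_eq_iff)

theorem mainTheorem6:
  fixes G :: "'a graph" and W1 W2 :: "'a set"
  assumes "is_graph G"
    and "W1 \<subseteq> fst G" and "W2 \<subseteq> fst G" and "W1 \<inter> W2 = {}"
    and "reducible G W1"
  shows "(reducible (reduction G W1) W2 \<longleftrightarrow> reducible G (W1 \<union> W2))
    \<and> (reducible G (W1 \<union> W2) \<longrightarrow>
         reduction G (W1 \<union> W2) = reduction (reduction G W1) W2)"
proof -
  have "W2 \<subseteq> fst G - W1" using assms(3,4) by blast
  note two_steps = assms(1,5,2) this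
  show ?thesis
    using reducible_Un_of_reduction[OF two_steps] reduction_reducible_of_Un[OF two_steps]
      reduction_Un[OF two_steps] by blast
qed

end
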